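(* Let $(X,d)$ be a locally compact metric space and $f:X\to X$ a homeomorphism satisfying the topological shadowing property. Then for every $\epsilon\in\mathcal{C}^+$ there exists $\delta\in\mathcal{C}^+$ such that for every $\delta$-pseudo-orbit $\{x_n\}_{n\in\mathbb{Z}}$ there is $y\in X$ with $d(x_n,f^n(y))<\epsilon(f^n(y))$ for all $n\in\mathbb{Z}$.
   Context: $\mathcal{C}^+=\{\epsilon:X\to\mathbb{R}^+ : \epsilon \text{ continuous}\}$. For $\delta\in\mathcal{C}^+$, a sequence $\{x_n\}_{n\in\mathbb{Z}}\subset X$ is a $\delta$-pseudo-orbit of $f$ if $d(f(x_n),x_{n+1})<\delta(f(x_n))$ for every $n\in\mathbb{Z}$. For $\epsilon\in\mathcal{C}^+$, the sequence $\{x_n\}$ is $\epsilon$-shadowed by an orbit if there is $y\in X$ with $d(f^n(y),x_n)<\epsilon(x_n)$ for every $n\in\mathbb{Z}$. The homeomorphism $f$ satisfies the topological shadowing property if for every $\epsilon\in\mathcal{C}^+$ there exists $\delta\in\mathcal{C}^+$ such that every $\delta$-pseudo-orbit is $\epsilon$-shadowed by an orbit. *)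

theory Defs
  imports "HOL-Analysis.Analysis"
begin

definition pos_cont :: "('a::metric_space \<Rightarrow> real) \<Rightarrow> bool" where
  "pos_cont e \<longleftrightarrow> continuous_on UNIV e \<and> (\<forall>x. e x > 0)"

definition iterz :: "('a \<Rightarrow> 'a) \<Rightarrow> int \<Rightarrow> 'a \<Rightarrow> 'a" where
  "iterz f n = (if n \<ge> 0 then f ^^ nat n else (inv f) ^^ nat (- n))"

definition pseudo_orbit :: "('a::metric_space \<Rightarrow> 'a) \<Rightarrow> ('a \<Rightarrow> real) \<Rightarrow> (int \<Rightarrow> 'a) \<Rightarrow> bool" where
  "pseudo_orbit f \<delta> x \<longleftrightarrow> (\<forall>n. dist (f (x n)) (x (n + 1)) < \<delta> (f (x n)))"

definition shadowed :: "('a::metric_space \<Rightarrow> 'a) \<Rightarrow> ('a \<Rightarrow> real) \<Rightarrow> (int \<Rightarrow> 'a) \<Rightarrow> bool" where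
  "shadowed f \<epsilon> x \<longleftrightarrow> (\<exists>y. \<forall>n. dist (iterz f n y) (x n) < \<epsilon> (x n))"

definition topological_shadowing :: "('a::metric_space \<Rightarrow> 'a) \<Rightarrow> bool" where
  "topological_shadowing f \<longleftrightarrow>
     (\<forall>\<epsilon>. pos_cont \<epsilon> \<longrightarrow> (\<exists>\<delta>. pos_cont \<delta> \<and>
        (\<forall>x. pseudo_orbit f \<delta> x \<longrightarrow> shadowed f \<epsilon> x)))"

end

theory Submission
  imports Defs
begin

text \<open>Replace \<open>\<epsilon>\<close> by its largest 1-Lipschitz minorant \<open>h\<close>, which is still positive and
continuous, and shadow with precision \<open>h/2\<close>. If \<open>d(f\<^sup>n y, x\<^sub>n) < h(x\<^sub>n)/2\<close>, then the Lipschitz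
bound \<open>h(x\<^sub>n) \<le> h(f\<^sup>n y) + d(x\<^sub>n, f\<^sup>n y)\<close> gives \<open>d(x\<^sub>n, f\<^sup>n y) < h(f\<^sup>n y) \<le> \<epsilon>(f\<^sup>n y)\<close>, so the
precision can be measured at the shadowing orbit instead of the pseudo-orbit.\<close>

definition lipschitz_minorant :: "('a::metric_space \<Rightarrow> real) \<Rightarrow> 'a \<Rightarrow> real" where
  "lipschitz_minorant e x = Inf (range (\<lambda>z. e z + dist x z))"

context
  fixes e :: "'a::metric_space \<Rightarrow> real"
  assumes nonneg: "\<And>z. 0 \<le> e z"
begin

private lemma bdd_below_range_add_dist: "bdd_below (range (\<lambda>z. e z + dist x z))"
  by (rule bdd_belowI[where m = 0]) (auto intro: add_nonneg_nonneg nonneg)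

lemma lipschitz_minorant_le: "lipschitz_minorant e x \<le> e x"
  using cInf_lower[OF rangeI bdd_below_range_add_dist, of x x]
  by (simp add: lipschitz_minorant_def)

lemma lipschitz_minorant_le_add_dist:
  "lipschitz_minorant e x \<le> lipschitz_minorant e y + dist x y"
proof -
  have "lipschitz_minorant e x - dist x y \<le> lipschitz_minorant e y"
    unfolding lipschitz_minorant_def
  proof (rule cInf_greatest)
    fix v assume "v \<in> range (\<lambda>z. e z + dist y z)"
    then obtain z where v: "v = e z + dist y z" by auto
    have "Inf (range (\<lambda>z. e z + dist x z)) \<le> e z + dist x z"
      by (rule cInf_lower[OF rangeI bdd_below_range_add_dist])
    with v dist_triangle[of x z y]
    show "Inf (range (\<lambda>z. e z + dist x z)) - dist x y \<le> v" by linarith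
  qed auto
  then show ?thesis by linarith
qed

lemma lipschitz_on_lipschitz_minorant: "1-lipschitz_on UNIV (lipschitz_minorant e)"
proof (rule lipschitz_onI)
  fix x y :: 'a
  show "dist (lipschitz_minorant e x) (lipschitz_minorant e y) \<le> 1 * dist x y"
    using lipschitz_minorant_le_add_dist[of x y] lipschitz_minorant_le_add_dist[of y x]
    by (simp add: dist_real_def dist_commute abs_le_iff)
qed simp

lemma lipschitz_minorant_pos:
  assumes cont: "isCont e x" and pos: "e x > 0"
  shows "lipschitz_minorant e x > 0"
proof -
  obtain r where r: "r > 0" "\<And>z. dist z x < r \<Longrightarrow> dist (e z) (e x) < e x / 2"
    using cont pos unfolding continuous_at_eps_delta by (metis half_gt_zero)
  \<comment> \<open>Near \<open>x\<close> the term \<open>e z\<close> exceeds \<open>e x/2\<close>; far from \<open>x\<close> the term \<open>dist x z\<close> is at least \<open>r\<close>.\<close>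
  have "min (e x / 2) r \<le> lipschitz_minorant e x"
    unfolding lipschitz_minorant_def
  proof (rule cInf_greatest)
    fix v assume "v \<in> range (\<lambda>z. e z + dist x z)"
    then obtain z where v: "v = e z + dist x z" by auto
    show "min (e x / 2) r \<le> v"
    proof (cases "dist z x < r")
      case True
      then have "\<bar>e z - e x\<bar> < e x / 2" using r(2) unfolding dist_real_def by blast
      then have "e z > e x / 2" by linarith
      then show ?thesis using v zero_le_dist[of x z] by linarith
    next
      case False
      then show ?thesis using v nonneg[of z] by (simp add: dist_commute)
    qed
  qed auto
  moreover have "0 < min (e x / 2) r" using pos r(1) by simp
  ultimately show ?thesis by linarith
qed

end

lemma pos_cont_half_lipschitz_minorant:
  assumes "pos_cont e"
  shows "pos_cont (\<lambda>x. lipschitz_minorant e x / 2)"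
proof -
  have nonneg: "\<And>z. 0 \<le> e z" and "\<And>x. isCont e x" "\<And>x. e x > 0"
    using assms by (auto simp: pos_cont_def less_imp_le continuous_on_eq_continuous_at)
  then have "\<And>x. lipschitz_minorant e x > 0"
    by (rule lipschitz_minorant_pos)
  then show ?thesis
    unfolding pos_cont_def
    using lipschitz_on_continuous_on[OF lipschitz_on_lipschitz_minorant[OF nonneg]]
    by (auto intro!: continuous_intros)
qed

lemma dist_lt_of_dist_lt_half_lipschitz_minorant:
  assumes "pos_cont e" and "dist y x < lipschitz_minorant e x / 2"
  shows "dist x y < e y"
proof -
  have nonneg: "\<And>z. 0 \<le> e z" using assms(1) by (auto simp: pos_cont_def less_imp_le)
  have "lipschitz_minorant e x \<le> lipschitz_minorant e y + dist x y"
    by (rule lipschitz_minorant_le_add_dist[OF nonneg])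
  moreover have "lipschitz_minorant e y \<le> e y"
    by (rule lipschitz_minorant_le[OF nonneg])
  ultimately show ?thesis using assms(2) by (simp add: dist_commute)
qed

theorem mainTheorem3:
  fixes f :: "'a::metric_space \<Rightarrow> 'a"
  assumes "locally compact (UNIV :: 'a set)"
    and "homeomorphism UNIV UNIV f (inv f)"
    and "topological_shadowing f"
  shows "\<forall>\<epsilon>. pos_cont \<epsilon> \<longrightarrow> (\<exists>\<delta>. pos_cont \<delta> \<and>
           (\<forall>x. pseudo_orbit f \<delta> x \<longrightarrow>
              (\<exists>y. \<forall>n. dist (x n) (iterz f n y) < \<epsilon> (iterz f n y))))"
proof (intro allI impI)
  fix e :: "'a \<Rightarrow> real" assume e: "pos_cont e"
  obtain d where "pos_cont d"
    and shadow: "\<And>x. pseudo_orbit f d x \<Longrightarrow> shadowed f (\<lambda>x. lipschitz_minorant e x / 2) x"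
    using assms(3) pos_cont_half_lipschitz_minorant[OF e]
    unfolding topological_shadowing_def by blast
  moreover have "\<exists>y. \<forall>n. dist (x n) (iterz f n y) < e (iterz f n y)"
    if "pseudo_orbit f d x" for x
    using shadow[OF that] dist_lt_of_dist_lt_half_lipschitz_minorant[OF e]
    unfolding shadowed_def by blast
  ultimately show "\<exists>\<delta>. pos_cont \<delta> \<and> (\<forall>x. pseudo_orbit f \<delta> x \<longrightarrow>
              (\<exists>y. \<forall>n. dist (x n) (iterz f n y) < e (iterz f n y)))"
    by blast
qed

end
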